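(* Let $v$ be an equilibrium in the interior of $\Delta$ (all coordinates positive) which is different from the center $(1/N,\dots,1/N)$. Then the set $\{v_i: i\le N\}$ has exactly two elements.
   Context: Let $N\ge3$, $\alpha>1$, and $A_{i,j}=1-\delta_{i,j}$ for $i,j\le N$. Let $\Delta=\{v\in\mathbb R_+^N:\sum_iv_i=1,\ v_i\le3/4\ \forall i\}$. For $v\in\Delta$ let $v^\alpha=(v_i^\alpha)_i$, $H(v)=\sum_{i\neq j}v_i^\alpha v_j^\alpha$, $\pi_i(v)=v_i^\alpha(Av^\alpha)_i/H(v)$, and $F(v)=-v+\pi(v)$. An equilibrium is $v\in\Delta$ with $F(v)=0$. *)

theory Defs
  imports "HOL-Analysis.Analysis"
begin

text \<open>Vectors in R^N are functions nat => real, indices 0..N-1.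
  A i j = 1 - delta i j, so (A w)_i = sum over j different from i of w_j.\<close>

definition simplex_D :: "nat \<Rightarrow> (nat \<Rightarrow> real) set" where
  "simplex_D N = {v. (\<forall>i<N. 0 \<le> v i \<and> v i \<le> 3/4) \<and> (\<Sum>i<N. v i) = 1}"

definition Amat :: "nat \<Rightarrow> nat \<Rightarrow> real" where
  "Amat i j = (if i = j then 0 else 1)"

definition vpow :: "real \<Rightarrow> (nat \<Rightarrow> real) \<Rightarrow> nat \<Rightarrow> real" where
  "vpow \<alpha> v i = v i powr \<alpha>"

definition Hfun :: "nat \<Rightarrow> real \<Rightarrow> (nat \<Rightarrow> real) \<Rightarrow> real" where
  "Hfun N \<alpha> v = (\<Sum>i<N. \<Sum>j<N. if i \<noteq> j then vpow \<alpha> v i * vpow \<alpha> v j else 0)"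

definition pifun :: "nat \<Rightarrow> real \<Rightarrow> (nat \<Rightarrow> real) \<Rightarrow> nat \<Rightarrow> real" where
  "pifun N \<alpha> v i = vpow \<alpha> v i * (\<Sum>j<N. Amat i j * vpow \<alpha> v j) / Hfun N \<alpha> v"

definition Ffun :: "nat \<Rightarrow> real \<Rightarrow> (nat \<Rightarrow> real) \<Rightarrow> nat \<Rightarrow> real" where
  "Ffun N \<alpha> v i = - v i + pifun N \<alpha> v i"

definition equilibrium :: "nat \<Rightarrow> real \<Rightarrow> (nat \<Rightarrow> real) \<Rightarrow> bool" where
  "equilibrium N \<alpha> v \<longleftrightarrow> v \<in> simplex_D N \<and> (\<forall>i<N. Ffun N \<alpha> v i = 0)"

end

theory Submission
  imports Defs
begin

text \<open>At an interior equilibrium every coordinate \<open>x = v i\<close> solves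
  \<open>S x powr (\<alpha> - 1) - x powr (2\<alpha> - 1) = H\<close> with \<open>S = \<Sum>\<^sub>j v\<^sub>j\<^sup>\<alpha>\<close> and \<open>H = Hfun N \<alpha> v\<close>.
  The derivative of the left-hand side vanishes only where \<open>x\<^sup>\<alpha> = S (\<alpha> - 1) / (2\<alpha> - 1)\<close>,
  i.e. at most once on \<open>(0,\<infinity>)\<close>, so by Rolle's theorem the equation has at most two
  positive solutions. The coordinates therefore take at most two values, and a single value
  is impossible since it forces \<open>v\<close> to be the centre.\<close>

lemma card_le_2_if_no_strict_chain3:
  fixes A :: "'a::linorder set"
  assumes "finite A"
    and no_chain: "\<And>a b c. a \<in> A \<Longrightarrow> b \<in> A \<Longrightarrow> c \<in> A \<Longrightarrow> a < b \<Longrightarrow> b < c \<Longrightarrow> False"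
  shows "card A \<le> 2"
proof (rule ccontr)
  assume big: "\<not> card A \<le> 2"
  then have "A \<noteq> {}" by auto
  then have ends: "Min A \<in> A" "Max A \<in> A" using \<open>finite A\<close> by auto
  have "card {Min A, Max A} \<le> 2" by (simp add: card_insert_if)
  then have "card (A - {Min A, Max A}) > 0"
    using big ends \<open>finite A\<close> by (simp add: card_Diff_subset)
  then obtain b where b: "b \<in> A" "b \<noteq> Min A" "b \<noteq> Max A"
    by (metis Diff_iff card_gt_0_iff ex_in_conv insertCI)
  have "Min A < b" "b < Max A"
    using b \<open>finite A\<close> by (auto simp: order_le_neq_trans)
  with no_chain ends b(1) show False by blast
qed

lemma no_three_equal_values_if_unique_critical_point:
  fixes f f' :: "real \<Rightarrow> real"
  assumes "is_interval I"
    and deriv: "\<And>x. x \<in> I \<Longrightarrow> (f has_real_derivative f' x) (at x)"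
    and critical_unique: "\<And>x y. x \<in> I \<Longrightarrow> y \<in> I \<Longrightarrow> f' x = 0 \<Longrightarrow> f' y = 0 \<Longrightarrow> x = y"
    and "a \<in> I" "c \<in> I" "a < b" "b < c" "f a = f b" "f b = f c"
  shows False
proof -
  have between: "x \<in> I" if "p \<in> I" "q \<in> I" "p \<le> x" "x \<le> q" for p q x
    using \<open>is_interval I\<close> that unfolding is_interval_1 by blast
  have critical_between: "\<exists>z\<in>I. p < z \<and> z < q \<and> f' z = 0"
    if pq: "p \<in> I" "q \<in> I" "p < q" "f p = f q" for p q
  proof -
    have sub: "x \<in> I" if "p \<le> x" "x \<le> q" for x
      using between \<open>p \<in> I\<close> \<open>q \<in> I\<close> that by blast
    have "continuous_on {p..q} f"
      by (intro continuous_at_imp_continuous_on ballI DERIV_isCont[OF deriv] sub) auto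
    moreover have "f differentiable (at x)" if "p < x" "x < q" for x
      using deriv[OF sub] that unfolding real_differentiable_def by (meson less_imp_le)
    ultimately obtain z where z: "p < z" "z < q" "DERIV f z :> 0"
      using Rolle[of p q f] pq(3,4) by blast
    have "z \<in> I"
      using sub z by simp
    with z have "f' z = 0"
      using DERIV_unique deriv by metis
    with z \<open>z \<in> I\<close> show ?thesis by blast
  qed
  have "b \<in> I"
    using between[of a c b] assms(4-7) by simp
  then obtain z1 z2 where "z1 \<in> I" "z1 < b" "f' z1 = 0" "z2 \<in> I" "b < z2" "f' z2 = 0"
    using critical_between[of a b] critical_between[of b c] assms(4-9) by blast
  then show False
    using critical_unique[of z1 z2] by simp
qed

lemma powr_level_equation_card_le_2:
  fixes S H \<alpha> :: real
  assumes "\<alpha> \<noteq> 0" "2 * \<alpha> \<noteq> 1" "finite A"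
    and level: "\<And>x. x \<in> A \<Longrightarrow> x > 0 \<and> S * x powr (\<alpha> - 1) - x powr (2 * \<alpha> - 1) = H"
  shows "card A \<le> 2"
proof (rule card_le_2_if_no_strict_chain3[OF \<open>finite A\<close>])
  define h where "h x = S * x powr (\<alpha> - 1) - x powr (2 * \<alpha> - 1)" for x :: real
  define h' where "h' x = x powr (\<alpha> - 2) * (S * (\<alpha> - 1) - (2 * \<alpha> - 1) * x powr \<alpha>)" for x :: real
  have deriv: "(h has_real_derivative h' x) (at x)" if "x \<in> {0<..}" for x
  proof -
    have "x powr (2 * \<alpha> - 1 - 1) = x powr (\<alpha> - 2) * x powr \<alpha>"
      by (simp add: powr_add[symmetric])
    then show ?thesis
      unfolding h_def h'_def using that
      by (auto intro!: derivative_eq_intros simp: algebra_simps)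
  qed
  have critical_unique: "x = y" if "x \<in> {0<..}" "y \<in> {0<..}" "h' x = 0" "h' y = 0" for x y
  proof -
    have root: "z powr \<alpha> = S * (\<alpha> - 1) / (2 * \<alpha> - 1)" if "z > 0" "h' z = 0" for z
    proof -
      have "S * (\<alpha> - 1) - (2 * \<alpha> - 1) * z powr \<alpha> = 0"
        using that by (simp add: h'_def)
      with \<open>2 * \<alpha> \<noteq> 1\<close> show ?thesis
        by (simp add: field_simps)
    qed
    have "x = (x powr \<alpha>) powr (1 / \<alpha>)" "y = (y powr \<alpha>) powr (1 / \<alpha>)"
      using that \<open>\<alpha> \<noteq> 0\<close> by (simp_all add: powr_powr)
    then show ?thesis
      using root that by simp
  qed
  show False
    if "a \<in> A" "b \<in> A" "c \<in> A" "a < b" "b < c" for a b c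
  proof (rule no_three_equal_values_if_unique_critical_point[OF is_interval_oi[of 0] deriv critical_unique])
    show "h a = h b" "h b = h c"
      using level that(1-3) by (simp_all add: h_def)
  qed (use level that in auto)
qed

lemma sum_Amat_mult:
  fixes w :: "nat \<Rightarrow> real"
  assumes "i < N"
  shows "(\<Sum>j<N. Amat i j * w j) = (\<Sum>j<N. w j) - w i"
proof -
  have "(\<Sum>j<N. Amat i j * w j) = (\<Sum>j<N. w j - (if i = j then w j else 0))"
    by (rule sum.cong) (auto simp: Amat_def)
  also have "\<dots> = (\<Sum>j<N. w j) - w i"
    using assms by (simp add: sum_subtractf)
  finally show ?thesis .
qed

lemma Ffun_zero_level_equation:
  assumes "Ffun N \<alpha> v i = 0" "i < N" "v i > 0"
  shows "(\<Sum>j<N. v j powr \<alpha>) * v i powr (\<alpha> - 1) - v i powr (2 * \<alpha> - 1) = Hfun N \<alpha> v"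
proof -
  define x w S H where "x = v i" and "w = v i powr \<alpha>"
    and "S = (\<Sum>j<N. v j powr \<alpha>)" and "H = Hfun N \<alpha> v"
  have "x = w * (S - w) / H"
    using assms(1,2) sum_Amat_mult[OF assms(2), of "vpow \<alpha> v"]
    by (simp add: Ffun_def pifun_def x_def w_def S_def H_def vpow_def)
  moreover have "x > 0"
    using assms(3) by (simp add: x_def)
  ultimately have "H \<noteq> 0"
    by auto
  with \<open>x = w * (S - w) / H\<close> have "x * H = S * w - w * w"
    by (simp add: field_simps)
  moreover have "S * w = x * (S * x powr (\<alpha> - 1))" "w * w = x * x powr (2 * \<alpha> - 1)"
    using \<open>x > 0\<close> by (simp_all add: w_def x_def powr_mult_base powr_add[symmetric])
  ultimately have "x * H = x * (S * x powr (\<alpha> - 1) - x powr (2 * \<alpha> - 1))"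
    by (simp only: right_diff_distrib)
  with \<open>x > 0\<close> show ?thesis
    by (simp add: x_def S_def H_def)
qed

lemma constant_on_simplex_is_centre:
  assumes "(\<Sum>i<N. v i) = (1::real)" "\<And>i. i < N \<Longrightarrow> v i = c"
  shows "c = 1 / real N"
proof -
  have "real N * c = 1"
    using assms by simp
  then have "real N \<noteq> 0"
    by (metis mult_zero_left zero_neq_one)
  with \<open>real N * c = 1\<close> show ?thesis
    by (simp add: field_simps)
qed

theorem lemma4p3:
  fixes N :: nat and \<alpha> :: real and v :: "nat \<Rightarrow> real"
  assumes "N \<ge> 3" and "\<alpha> > 1"
    and "equilibrium N \<alpha> v"
    and "\<forall>i<N. v i > 0"
    and "\<exists>i<N. v i \<noteq> 1 / real N"
  shows "card (v ` {..<N}) = 2"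
proof -
  have sum_one: "(\<Sum>i<N. v i) = 1" and stationary: "\<And>i. i < N \<Longrightarrow> Ffun N \<alpha> v i = 0"
    using assms(3) by (auto simp: equilibrium_def simplex_D_def)
  have "card (v ` {..<N}) \<le> 2"
  proof (rule powr_level_equation_card_le_2)
    fix x assume "x \<in> v ` {..<N}"
    then obtain i where "i < N" "x = v i"
      by blast
    then show "x > 0 \<and> (\<Sum>j<N. v j powr \<alpha>) * x powr (\<alpha> - 1) - x powr (2 * \<alpha> - 1) = Hfun N \<alpha> v"
      using assms(4) Ffun_zero_level_equation[OF stationary] by blast
  qed (use assms(2) in auto)
  moreover have "card (v ` {..<N}) \<noteq> 1"
  proof
    assume "card (v ` {..<N}) = 1"
    then obtain c where "v ` {..<N} = {c}"
      by (rule card_1_singletonE)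
    then have "\<And>i. i < N \<Longrightarrow> v i = c"
      by auto
    then show False
      using constant_on_simplex_is_centre[OF sum_one] assms(5) by metis
  qed
  moreover have "v ` {..<N} \<noteq> {}"
    using assms(1) by (simp add: lessThan_empty_iff)
  ultimately show ?thesis
    by (simp add: le_Suc_eq numeral_2_eq_2)
qed

end
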